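(* Fix an integer $1\le k<\infty$ and a real $0<\alpha<\infty$. Let $\beta=\beta_n\ge0$ with $n\beta_n\to0$, and let $(\delta_n)$ be a positive sequence with $\log(\delta_n)/\log n\to0$. Set $b_n=\sqrt{2\log n}-\frac{\log\log n+2\log\delta_n+\log(4\pi)}{2\sqrt{2\log n}}$. Then, as $n\to\infty$, $$\frac{Z_{n-k,\alpha,\beta}}{Z_{n,\alpha,\beta}}=(1+o(1))\,(2\pi)^{-k/2}\alpha^{k/2},\qquad \frac{Z_{n-k,\alpha-\frac{k\beta}{4b_n^2},\beta}}{Z_{n-k,\alpha,\beta}}=1+o(1).$$
   Context: For $\alpha>0$, $\beta\ge0$, $m\ge1$, $Z_{m,\alpha,\beta}=\int_{\mathbb{R}^m}\exp(-\frac{\alpha}{2}\sum_{i=1}^m\lambda_i^2)\prod_{1\le i<j\le m}|\lambda_i-\lambda_j|^\beta\prod_{i=1}^m\mathrm{d}\lambda_i$ (for large $n$, $\alpha-\frac{k\beta}{4b_n^2}>0$ so the second partition function is defined). *)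

theory Defs
  imports "HOL-Probability.Probability"
begin

definition Zpart :: "nat \<Rightarrow> real \<Rightarrow> real \<Rightarrow> real" where
  "Zpart m \<alpha> \<beta> =
     (LINT l | PiM {..<m} (\<lambda>_. lborel).
        exp (- (\<alpha> / 2) * (\<Sum>i<m. (l i)\<^sup>2)) *
        (\<Prod>p\<in>{(i, j). i < j \<and> j < m}. \<bar>l (fst p) - l (snd p)\<bar> powr \<beta>))"

definition bseq :: "(nat \<Rightarrow> real) \<Rightarrow> nat \<Rightarrow> real" where
  "bseq \<delta> n = sqrt (2 * ln (real n)) -
     (ln (ln (real n)) + 2 * ln (\<delta> n) + ln (4 * pi)) / (2 * sqrt (2 * ln (real n)))"

end

theory Submission
  imports Defs
begin

(* Integrating out the last eigenvalue compares Z(m+1) with Z(m) times the Gaussian mass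
   sqrt (2 pi / a), which is the exact ratio for beta = 0.  The new Vandermonde factor
   prod_i |x_i - y|^beta lies above 1 - beta * sum_i h (y - x_i) for an integrable h, and below
   (1 + m beta |y|) * prod_i (1 + |x_i|)^beta; the last product is absorbed into the Gaussian
   weight by lowering a to a - e.  Rescaling all variables gives
   Z(m, a - e) = (a / (a - e))^((m + beta m (m - 1) / 2) / 2) * Z(m, a), a factor that tends to 1
   when n e -> 0 and n^2 beta e -> 0.  Hence, if n beta_n -> 0, every ratio Z(m+1) / Z(m) with
   m < n lies between bounds converging to sqrt (2 pi / alpha), and the first claim follows by
   telescoping k of them.  The second claim is the rescaling identity with
   e = k beta_n / (4 b_n^2), since b_n -> infinity. *)

section \<open>Rescaling the product Lebesgue measure\<close>

lemma measurable_nn_integral_fun_upd: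
  fixes f :: "(nat \<Rightarrow> real) \<Rightarrow> ennreal"
  assumes "f \<in> borel_measurable (PiM (insert i I) (\<lambda>_. lborel))"
  shows "(\<lambda>x. \<integral>\<^sup>+ y. f (x(i := y)) \<partial>lborel) \<in> borel_measurable (PiM I (\<lambda>_. lborel))"
proof -
  have "(\<lambda>(x, y). f (x(i := y))) \<in> borel_measurable (PiM I (\<lambda>_. lborel) \<Otimes>\<^sub>M lborel)"
    using measurable_comp[OF measurable_add_dim[of i I "\<lambda>_. lborel"] assms]
    by (simp add: comp_def case_prod_beta')
  then show ?thesis
    using lborel.borel_measurable_nn_integral[of "\<lambda>x y. f (x(i := y))"] by simp
qed

lemma nn_integral_PiM_lborel_scale:
  fixes f :: "(nat \<Rightarrow> real) \<Rightarrow> ennreal"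
  assumes "finite I" "0 < c" "f \<in> borel_measurable (PiM I (\<lambda>_. lborel))"
  shows "(\<integral>\<^sup>+ x. f x \<partial>PiM I (\<lambda>_. lborel)) =
    ennreal (c ^ card I) * (\<integral>\<^sup>+ u. f (\<lambda>i\<in>I. c * u i) \<partial>PiM I (\<lambda>_. lborel))"
  using assms(1,3)
proof (induction I arbitrary: f rule: finite_induct)
  case empty
  show ?case by (simp add: PiM_empty nn_integral_count_space_finite)
next
  case (insert i I)
  interpret product_sigma_finite "\<lambda>_::nat. lborel :: real measure" by standard
  define scale where "scale J u = (\<lambda>j\<in>J. c * u j)" for J and u :: "nat \<Rightarrow> real"
  have [measurable]: "scale J \<in> measurable (PiM J (\<lambda>_. lborel)) (PiM J (\<lambda>_. lborel))" for J
    unfolding scale_def by (intro measurable_restrict) (auto intro: measurable_component_singleton)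
  note f[measurable] = insert.prems
  have fs[measurable]: "(\<lambda>u. f (scale (insert i I) u)) \<in> borel_measurable (PiM (insert i I) (\<lambda>_. lborel))"
    by measurable
  define G where "G x = (\<integral>\<^sup>+ y. f (x(i := y)) \<partial>lborel)" for x
  have G_scale: "G (scale I u) = ennreal c * (\<integral>\<^sup>+ y. f (scale (insert i I) (u(i := y))) \<partial>lborel)" for u
  proof -
    have "scale I u \<in> space (PiM I (\<lambda>_. lborel))"
      by (auto simp: scale_def space_PiM)
    from measurable_comp[OF measurable_component_update[OF this insert.hyps(2)] f]
    have "G (scale I u) = ennreal c * (\<integral>\<^sup>+ y. f ((scale I u)(i := 0 + c * y)) \<partial>lborel)"
      unfolding G_def using nn_integral_real_affine[of "\<lambda>y. f ((scale I u)(i := y))" c 0] \<open>0 < c\<close>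
      by (simp add: comp_def)
    moreover have "(scale I u)(i := 0 + c * y) = scale (insert i I) (u(i := y))" for y
      using insert.hyps(2) by (auto simp: scale_def fun_eq_iff)
    ultimately show ?thesis by simp
  qed
  have "(\<integral>\<^sup>+ x. f x \<partial>PiM (insert i I) (\<lambda>_. lborel)) = (\<integral>\<^sup>+ x. G x \<partial>PiM I (\<lambda>_. lborel))"
    unfolding G_def by (rule product_nn_integral_insert[OF insert.hyps f])
  also have "\<dots> = ennreal (c ^ card I) * (\<integral>\<^sup>+ u. G (scale I u) \<partial>PiM I (\<lambda>_. lborel))"
    using insert.IH[OF measurable_nn_integral_fun_upd[OF f]] unfolding G_def scale_def .
  also have "(\<integral>\<^sup>+ u. G (scale I u) \<partial>PiM I (\<lambda>_. lborel)) =
      ennreal c * (\<integral>\<^sup>+ u. \<integral>\<^sup>+ y. f (scale (insert i I) (u(i := y))) \<partial>lborel \<partial>PiM I (\<lambda>_. lborel))"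
    unfolding G_scale by (rule nn_integral_cmult[OF measurable_nn_integral_fun_upd[OF fs]])
  also have "(\<integral>\<^sup>+ u. \<integral>\<^sup>+ y. f (scale (insert i I) (u(i := y))) \<partial>lborel \<partial>PiM I (\<lambda>_. lborel)) =
      (\<integral>\<^sup>+ u. f (scale (insert i I) u) \<partial>PiM (insert i I) (\<lambda>_. lborel))"
    by (rule product_nn_integral_insert[OF insert.hyps fs, symmetric])
  finally show ?case
    using insert.hyps \<open>0 < c\<close> by (simp add: scale_def ennreal_mult' mult_ac del: restrict_apply)
qed

section \<open>One-dimensional estimates\<close>

definition inv_sqrt_bump :: "real \<Rightarrow> real" where
  "inv_sqrt_bump t = (if \<bar>t\<bar> < 1 then 2 * \<bar>t\<bar> powr (-1/2) else 0)"

lemma inv_sqrt_bump_nonneg: "0 \<le> inv_sqrt_bump t"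
  by (simp add: inv_sqrt_bump_def)

lemma borel_measurable_inv_sqrt_bump[measurable]: "inv_sqrt_bump \<in> borel_measurable borel"
  unfolding inv_sqrt_bump_def[abs_def] by measurable

lemma one_minus_powr_le_inv_sqrt_bump:
  assumes "0 < t" "0 \<le> b"
  shows "1 - min (t powr b) 1 \<le> b * inv_sqrt_bump t"
proof (cases "t < 1")
  case False
  then have "1 \<le> t powr b" using assms by (simp add: ge_one_powr_ge_zero)
  then show ?thesis using assms inv_sqrt_bump_nonneg[of t] by simp
next
  case True
  have "1 + b * ln t \<le> t powr b"
    using assms exp_ge_add_one_self[of "b * ln t"] by (simp add: powr_def)
  moreover have "- ln t \<le> 2 * t powr (-1/2)"
    using ln_le_minus_one[of "t powr (-1/2)"] assms by (simp add: ln_powr)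
  then have "b * (- ln t) \<le> b * (2 * t powr (-1/2))"
    using assms by (intro mult_left_mono) auto
  moreover have "t powr b \<le> 1"
    using assms True powr_mono2[of b t 1] by simp
  ultimately show ?thesis
    using True assms by (simp add: inv_sqrt_bump_def)
qed

lemma nn_integral_inv_sqrt_bump_le: "(\<integral>\<^sup>+ t. ennreal (inv_sqrt_bump (t - c)) \<partial>lborel) \<le> 8"
proof -
  define g where "g t = indicator {0..1} t * t powr (-1/2)" for t :: real
  have g_meas[measurable]: "g \<in> borel_measurable borel"
    unfolding g_def[abs_def] by measurable
  have g_nonneg: "0 \<le> g t" for t
    by (simp add: g_def)
  have "((\<lambda>t. t powr (-1/2)) has_integral (1 powr (-1/2 + 1) / (-1/2 + 1))) {0..1::real}"
    by (rule has_integral_powr_from_0) auto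
  then have "((\<lambda>t. if t \<in> {0..1} then t powr (-1/2) else 0) has_integral (2::real)) UNIV"
    by (simp only: has_integral_restrict_UNIV) simp
  moreover have "g = (\<lambda>t. if t \<in> {0..1} then t powr (-1/2) else 0)"
    by (auto simp: g_def indicator_def)
  ultimately have "(g has_integral 2) UNIV"
    by simp
  then have int_g: "(\<integral>\<^sup>+ t. ennreal (g t) \<partial>lborel) = 2"
    using nn_integral_has_integral_lborel[OF g_meas g_nonneg] by simp
  have int_g_reflect: "(\<integral>\<^sup>+ t. ennreal (g (- t)) \<partial>lborel) = 2"
    using nn_integral_real_affine[of "\<lambda>t. ennreal (g t)" "-1" 0] int_g by simp
  have "ennreal (inv_sqrt_bump t) \<le> 2 * ennreal (g t) + 2 * ennreal (g (- t))" for t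
  proof -
    have "inv_sqrt_bump t \<le> 2 * g t + 2 * g (- t)"
      by (cases "0 < t") (auto simp: inv_sqrt_bump_def g_def indicator_def)
    then have "ennreal (inv_sqrt_bump t) \<le> ennreal (2 * g t + 2 * g (- t))"
      by (rule ennreal_leI)
    then show ?thesis
      using g_nonneg by (simp add: ennreal_plus ennreal_mult)
  qed
  then have "(\<integral>\<^sup>+ t. ennreal (inv_sqrt_bump t) \<partial>lborel) \<le>
      (\<integral>\<^sup>+ t. 2 * ennreal (g t) + 2 * ennreal (g (- t)) \<partial>lborel)"
    by (intro nn_integral_mono)
  also have "\<dots> = 8"
    by (simp add: nn_integral_add nn_integral_cmult int_g int_g_reflect)
  finally show ?thesis
    using nn_integral_real_affine[of "\<lambda>t. ennreal (inv_sqrt_bump (t - c))" 1 c] by simp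
qed

lemma prod_ge_one_minus_sum:
  fixes a :: "'a \<Rightarrow> real"
  assumes "finite I" "\<And>i. i \<in> I \<Longrightarrow> 0 \<le> a i \<and> a i \<le> 1"
  shows "1 - (\<Sum>i\<in>I. 1 - a i) \<le> (\<Prod>i\<in>I. a i)"
  using assms
proof (induction I rule: finite_induct)
  case (insert j I)
  then have IH: "1 - (\<Sum>i\<in>I. 1 - a i) \<le> (\<Prod>i\<in>I. a i)" and aj: "0 \<le> a j" "a j \<le> 1"
    by auto
  have "0 \<le> (\<Sum>i\<in>I. 1 - a i)"
    using insert by (intro sum_nonneg) auto
  then have "a j * (\<Sum>i\<in>I. 1 - a i) \<le> (\<Sum>i\<in>I. 1 - a i)"
    using aj by (rule mult_left_le_one_le)
  moreover have "a j * (1 - (\<Sum>i\<in>I. 1 - a i)) \<le> a j * (\<Prod>i\<in>I. a i)"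
    using mult_left_mono[OF IH aj(1)] .
  ultimately show ?case
    using insert by (simp add: right_diff_distrib)
qed simp

lemma one_plus_powr_le_exp:
  fixes b e t :: real
  assumes "0 < e" "0 \<le> b" "0 \<le> t"
  shows "(1 + t) powr b \<le> exp (e / 2 * t\<^sup>2 + b\<^sup>2 / (2 * e))"
proof -
  have "(1 + t) powr b = exp (b * ln (1 + t))"
    using assms by (simp add: powr_def)
  also have "\<dots> \<le> exp (b * t)"
    using assms by (simp add: mult_left_mono ln_add_one_self_le_self)
  also have "b * t \<le> e / 2 * t\<^sup>2 + b\<^sup>2 / (2 * e)"
  proof -
    have "0 \<le> (e * t - b)\<^sup>2 / (2 * e)"
      using assms by simp
    also have "\<dots> = e / 2 * t\<^sup>2 + b\<^sup>2 / (2 * e) - b * t"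
      using assms by (simp add: field_simps power2_eq_square)
    finally show ?thesis by simp
  qed
  finally show ?thesis by simp
qed

definition gauss :: "real \<Rightarrow> real \<Rightarrow> real" where
  "gauss a y = exp (- (a / 2) * y\<^sup>2)"

lemma gauss_pos: "0 < gauss a y"
  by (simp add: gauss_def)

lemma gauss_le_1: "0 \<le> a \<Longrightarrow> gauss a y \<le> 1"
  by (simp add: gauss_def)

lemma borel_measurable_gauss[measurable]: "gauss a \<in> borel_measurable borel"
  unfolding gauss_def[abs_def] by measurable

lemma gauss_eq_normal_density:
  assumes "0 < a"
  shows "gauss a y = sqrt (2 * pi / a) * normal_density 0 (1 / sqrt a) y"
  using assms by (simp add: gauss_def normal_density_def power_divide real_sqrt_divide field_simps)

lemma nn_integral_gauss:
  assumes "0 < a"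
  shows "(\<integral>\<^sup>+ y. ennreal (gauss a y) \<partial>lborel) = ennreal (sqrt (2 * pi / a))"
proof -
  have "(\<integral>\<^sup>+ y. ennreal (gauss a y) \<partial>lborel) =
      ennreal (sqrt (2 * pi / a)) * (\<integral>\<^sup>+ y. ennreal (normal_density 0 (1 / sqrt a) y) \<partial>lborel)"
    using assms by (simp add: gauss_eq_normal_density ennreal_mult nn_integral_cmult)
  also have "(\<integral>\<^sup>+ y. ennreal (normal_density 0 (1 / sqrt a) y) \<partial>lborel) = 1"
    using assms by (subst nn_integral_eq_integral) auto
  finally show ?thesis by simp
qed

lemma nn_integral_gauss_abs:
  assumes "0 < a"
  shows "(\<integral>\<^sup>+ y. ennreal (gauss a y * \<bar>y\<bar>) \<partial>lborel) = ennreal (2 / a)"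
proof -
  have moment: "has_bochner_integral lborel (\<lambda>y. normal_density 0 (1 / sqrt a) y * \<bar>y\<bar>)
      (1 / sqrt a * sqrt (2 / pi))"
    using normal_moment_abs_odd[of "1 / sqrt a" 0 0] assms by (simp add: field_simps)
  have "(\<integral>\<^sup>+ y. ennreal (gauss a y * \<bar>y\<bar>) \<partial>lborel) =
      ennreal (sqrt (2 * pi / a)) * (\<integral>\<^sup>+ y. ennreal (normal_density 0 (1 / sqrt a) y * \<bar>y\<bar>) \<partial>lborel)"
    using assms by (simp add: gauss_eq_normal_density ennreal_mult nn_integral_cmult mult.assoc)
  also have "(\<integral>\<^sup>+ y. ennreal (normal_density 0 (1 / sqrt a) y * \<bar>y\<bar>) \<partial>lborel) =
      ennreal (1 / sqrt a * sqrt (2 / pi))"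
    using integrable.intros[OF moment] has_bochner_integral_integral_eq[OF moment]
    by (subst nn_integral_eq_integral) auto
  also have "ennreal (sqrt (2 * pi / a)) * ennreal (1 / sqrt a * sqrt (2 / pi)) = ennreal (2 / a)"
    using assms by (simp add: real_sqrt_divide real_sqrt_mult field_simps flip: ennreal_mult)
  finally show ?thesis .
qed

section \<open>Integrating out one eigenvalue\<close>

definition vdm_row :: "nat \<Rightarrow> real \<Rightarrow> (nat \<Rightarrow> real) \<Rightarrow> real \<Rightarrow> real" where
  "vdm_row m b x y = (\<Prod>i<m. \<bar>x i - y\<bar> powr b)"

lemma vdm_row_nonneg: "0 \<le> vdm_row m b x y"
  by (simp add: vdm_row_def prod_nonneg)

lemma borel_measurable_vdm_row[measurable]: "vdm_row m b x \<in> borel_measurable borel"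
  unfolding vdm_row_def[abs_def] by measurable

lemma vdm_row_lower:
  assumes "0 \<le> b" "y \<notin> x ` {..<m}"
  shows "1 - (\<Sum>i<m. b * inv_sqrt_bump (y - x i)) \<le> vdm_row m b x y"
proof -
  have "1 - min (\<bar>x i - y\<bar> powr b) 1 \<le> b * inv_sqrt_bump (y - x i)" if "i < m" for i
  proof -
    have "0 < \<bar>x i - y\<bar>"
      using assms that by auto
    from one_minus_powr_le_inv_sqrt_bump[OF this assms(1)] show ?thesis
      by (simp add: inv_sqrt_bump_def abs_minus_commute)
  qed
  then have "1 - (\<Sum>i<m. b * inv_sqrt_bump (y - x i)) \<le> 1 - (\<Sum>i<m. 1 - min (\<bar>x i - y\<bar> powr b) 1)"
    by (intro diff_left_mono sum_mono) auto
  also have "\<dots> \<le> (\<Prod>i<m. min (\<bar>x i - y\<bar> powr b) 1)"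
    by (rule prod_ge_one_minus_sum) auto
  also have "\<dots> \<le> vdm_row m b x y"
    unfolding vdm_row_def by (intro prod_mono) auto
  finally show ?thesis .
qed

lemma vdm_row_upper:
  assumes "0 \<le> b" "real m * b \<le> 1"
  shows "vdm_row m b x y \<le> (1 + real m * b * \<bar>y\<bar>) * (\<Prod>i<m. (1 + \<bar>x i\<bar>) powr b)"
proof -
  have "vdm_row m b x y \<le> (\<Prod>i<m. (1 + \<bar>y\<bar>) powr b * (1 + \<bar>x i\<bar>) powr b)"
    unfolding vdm_row_def
  proof (intro prod_mono conjI)
    fix i
    have "\<bar>x i - y\<bar> \<le> (1 + \<bar>y\<bar>) * (1 + \<bar>x i\<bar>)"
      by (simp add: algebra_simps) (smt (verit) abs_ge_zero mult_nonneg_nonneg)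
    then show "\<bar>x i - y\<bar> powr b \<le> (1 + \<bar>y\<bar>) powr b * (1 + \<bar>x i\<bar>) powr b"
      using assms powr_mono2[of b] by (simp flip: powr_mult)
  qed auto
  also have "\<dots> = (1 + \<bar>y\<bar>) powr (real m * b) * (\<Prod>i<m. (1 + \<bar>x i\<bar>) powr b)"
    by (simp add: prod.distrib powr_realpow[symmetric] powr_powr mult.commute)
  also have "(1 + \<bar>y\<bar>) powr (real m * b) \<le> 1 + real m * b * \<bar>y\<bar>"
    using Youngs_inequality_0[of "real m * b" "1 - real m * b" "1 + \<bar>y\<bar>" 1] assms by (simp add: algebra_simps)
  finally show ?thesis
    by (simp add: mult_right_mono prod_nonneg)
qed

definition row_integral :: "nat \<Rightarrow> real \<Rightarrow> real \<Rightarrow> (nat \<Rightarrow> real) \<Rightarrow> ennreal" where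
  "row_integral m a b x = (\<integral>\<^sup>+ y. ennreal (gauss a y * vdm_row m b x y) \<partial>lborel)"

lemma row_integral_lower:
  assumes "0 < a" "0 \<le> b"
  shows "ennreal (sqrt (2 * pi / a)) \<le> row_integral m a b x + ennreal (8 * real m * b)"
proof -
  define bump where "bump y = (\<Sum>i<m. b * inv_sqrt_bump (y - x i))" for y
  have [measurable]: "bump \<in> borel_measurable borel"
    unfolding bump_def[abs_def] by measurable
  have bump_nonneg: "0 \<le> bump y" for y
    unfolding bump_def using assms by (simp add: sum_nonneg inv_sqrt_bump_nonneg)
  have "ennreal (gauss a y) \<le> ennreal (gauss a y * vdm_row m b x y) + ennreal (bump y)"
    if "y \<notin> x ` {..<m}" for y
  proof -
    have "gauss a y * (1 - bump y) \<le> gauss a y * vdm_row m b x y"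
      using vdm_row_lower[OF assms(2) that] gauss_pos[of a y] by (simp add: bump_def)
    moreover have "gauss a y * bump y \<le> bump y"
      using gauss_le_1[of a y] gauss_pos[of a y] assms bump_nonneg by (simp add: mult_left_le_one_le)
    ultimately have "gauss a y \<le> gauss a y * vdm_row m b x y + bump y"
      by (simp add: right_diff_distrib)
    then show ?thesis
      using gauss_pos[of a y] vdm_row_nonneg[of m b x y] bump_nonneg[of y]
      by (simp add: ennreal_leI flip: ennreal_plus)
  qed
  moreover have "AE y in lborel. y \<notin> x ` {..<m}"
    by (rule AE_discrete_difference) auto
  ultimately have "(\<integral>\<^sup>+ y. ennreal (gauss a y) \<partial>lborel) \<le>
      (\<integral>\<^sup>+ y. ennreal (gauss a y * vdm_row m b x y) + ennreal (bump y) \<partial>lborel)"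
    by (auto intro!: nn_integral_mono_AE elim!: eventually_mono)
  also have "\<dots> = row_integral m a b x + (\<integral>\<^sup>+ y. ennreal (bump y) \<partial>lborel)"
    unfolding row_integral_def by (intro nn_integral_add) measurable
  also have "(\<integral>\<^sup>+ y. ennreal (bump y) \<partial>lborel) =
      (\<Sum>i<m. ennreal b * (\<integral>\<^sup>+ y. ennreal (inv_sqrt_bump (y - x i)) \<partial>lborel))"
    using assms by (simp add: bump_def inv_sqrt_bump_nonneg ennreal_mult nn_integral_sum nn_integral_cmult
        flip: sum_ennreal)
  also have "\<dots> \<le> (\<Sum>i<m. ennreal b * 8)"
    by (intro sum_mono mult_left_mono nn_integral_inv_sqrt_bump_le) auto
  finally show ?thesis
    using assms by (simp add: nn_integral_gauss ennreal_mult' ennreal_of_nat_eq_real_of_nat mult_ac)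
qed

lemma row_integral_upper:
  assumes "0 < a" "0 \<le> b" "real m * b \<le> 1"
  shows "row_integral m a b x \<le>
    ennreal ((sqrt (2 * pi / a) + 2 * real m * b / a) * (\<Prod>i<m. (1 + \<bar>x i\<bar>) powr b))"
proof -
  define P where "P = (\<Prod>i<m. (1 + \<bar>x i\<bar>) powr b)"
  have P: "0 \<le> P"
    by (simp add: P_def prod_nonneg)
  have "ennreal (gauss a y * vdm_row m b x y) \<le>
      ennreal P * (ennreal (gauss a y) + ennreal (real m * b) * ennreal (gauss a y * \<bar>y\<bar>))" for y
  proof -
    have "gauss a y * vdm_row m b x y \<le> gauss a y * ((1 + real m * b * \<bar>y\<bar>) * P)"
      using vdm_row_upper[OF assms(2,3)] gauss_pos[of a y] by (simp add: P_def)
    also have "\<dots> = P * (gauss a y + real m * b * (gauss a y * \<bar>y\<bar>))"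
      by (simp add: algebra_simps)
    finally have "ennreal (gauss a y * vdm_row m b x y) \<le>
        ennreal (P * (gauss a y + real m * b * (gauss a y * \<bar>y\<bar>)))"
      by (rule ennreal_leI)
    also have "\<dots> = ennreal P * (ennreal (gauss a y) + ennreal (real m * b) * ennreal (gauss a y * \<bar>y\<bar>))"
      using P gauss_pos[of a y] assms by (simp add: ennreal_mult' ennreal_plus)
    finally show ?thesis .
  qed
  then have "row_integral m a b x \<le> (\<integral>\<^sup>+ y. ennreal P *
      (ennreal (gauss a y) + ennreal (real m * b) * ennreal (gauss a y * \<bar>y\<bar>)) \<partial>lborel)"
    unfolding row_integral_def by (rule nn_integral_mono)
  also have "\<dots> = ennreal P * ((\<integral>\<^sup>+ y. ennreal (gauss a y) \<partial>lborel) +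
      ennreal (real m * b) * (\<integral>\<^sup>+ y. ennreal (gauss a y * \<bar>y\<bar>) \<partial>lborel))"
    by (simp add: nn_integral_cmult nn_integral_add)
  also have "\<dots> = ennreal (P * (sqrt (2 * pi / a) + real m * b * (2 / a)))"
    using assms P by (simp add: nn_integral_gauss nn_integral_gauss_abs ennreal_mult del: times_divide_eq_right)
  finally show ?thesis
    by (simp add: P_def ac_simps)
qed

section \<open>The partition function\<close>

definition vdm_pairs :: "nat \<Rightarrow> (nat \<times> nat) set" where
  "vdm_pairs m = {(i, j). i < j \<and> j < m}"

definition ens_weight :: "nat \<Rightarrow> real \<Rightarrow> real \<Rightarrow> (nat \<Rightarrow> real) \<Rightarrow> real" where
  "ens_weight m a b l = exp (- (a / 2) * (\<Sum>i<m. (l i)\<^sup>2)) *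
     (\<Prod>p\<in>vdm_pairs m. \<bar>l (fst p) - l (snd p)\<bar> powr b)"

text \<open>\<open>Zpart\<close> as a nonnegative extended integral, so that the recursion in \<open>m\<close> can be
  manipulated before integrability is known.\<close>

definition ens_mass :: "nat \<Rightarrow> real \<Rightarrow> real \<Rightarrow> ennreal" where
  "ens_mass m a b = (\<integral>\<^sup>+ l. ennreal (ens_weight m a b l) \<partial>PiM {..<m} (\<lambda>_. lborel))"

lemma finite_vdm_pairs[simp]: "finite (vdm_pairs m)"
  by (rule finite_subset[of _ "{..<m} \<times> {..<m}"]) (auto simp: vdm_pairs_def)

lemma card_vdm_pairs_le: "card (vdm_pairs m) \<le> m * m"
proof -
  have "card (vdm_pairs m) \<le> card ({..<m} \<times> {..<m})"
    by (intro card_mono) (auto simp: vdm_pairs_def)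
  then show ?thesis
    by (simp add: card_cartesian_product)
qed

lemma vdm_pairs_Suc: "vdm_pairs (Suc m) = vdm_pairs m \<union> (\<lambda>i. (i, m)) ` {..<m}"
  by (auto simp: vdm_pairs_def less_Suc_eq)

lemma ens_weight_nonneg: "0 \<le> ens_weight m a b l"
  unfolding ens_weight_def by (intro mult_nonneg_nonneg prod_nonneg) auto

lemma borel_measurable_ens_weight[measurable]:
  "ens_weight m a b \<in> borel_measurable (PiM {..<m} (\<lambda>_. lborel))"
proof -
  have [measurable]: "(\<lambda>l. l i) \<in> borel_measurable (PiM {..<m} (\<lambda>_. lborel))" if "i < m" for i
    using measurable_component_singleton[of i "{..<m}" "\<lambda>_. lborel"] that by simp
  have "(\<lambda>l. \<bar>l (fst p) - l (snd p)\<bar> powr b) \<in> borel_measurable (PiM {..<m} (\<lambda>_. lborel))"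
    if "p \<in> vdm_pairs m" for p
    using that by (auto simp: vdm_pairs_def)
  then show ?thesis
    unfolding ens_weight_def[abs_def] by measurable
qed

lemma Zpart_eq_enn2real_ens_mass: "Zpart m a b = enn2real (ens_mass m a b)"
proof -
  have "Zpart m a b = (\<integral>l. ens_weight m a b l \<partial>PiM {..<m} (\<lambda>_. lborel))"
    unfolding Zpart_def ens_weight_def vdm_pairs_def ..
  also have "\<dots> = enn2real (ens_mass m a b)"
    unfolding ens_mass_def by (rule integral_eq_nn_integral) (auto simp: ens_weight_nonneg)
  finally show ?thesis .
qed

lemma Zpart_nonneg: "0 \<le> Zpart m a b"
  by (simp add: Zpart_eq_enn2real_ens_mass)

lemma ens_mass_0: "ens_mass 0 a b = 1"
  by (simp add: ens_mass_def ens_weight_def vdm_pairs_def PiM_empty nn_integral_count_space_finite)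

lemma ens_weight_fun_upd:
  "ens_weight (Suc m) a b (x(m := y)) = ens_weight m a b x * (gauss a y * vdm_row m b x y)"
proof -
  let ?f = "\<lambda>p. \<bar>(x(m := y)) (fst p) - (x(m := y)) (snd p)\<bar> powr b"
  have old: "(\<Prod>p\<in>vdm_pairs m. ?f p) = (\<Prod>p\<in>vdm_pairs m. \<bar>x (fst p) - x (snd p)\<bar> powr b)"
    by (intro prod.cong) (auto simp: vdm_pairs_def)
  have new: "(\<Prod>p\<in>(\<lambda>i. (i, m)) ` {..<m}. ?f p) = vdm_row m b x y"
    by (subst prod.reindex) (auto simp: inj_on_def vdm_row_def)
  have "vdm_pairs m \<inter> (\<lambda>i. (i, m)) ` {..<m} = {}"
    by (auto simp: vdm_pairs_def)
  then have "(\<Prod>p\<in>vdm_pairs (Suc m). ?f p) =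
      (\<Prod>p\<in>vdm_pairs m. \<bar>x (fst p) - x (snd p)\<bar> powr b) * vdm_row m b x y"
    unfolding vdm_pairs_Suc
    by (simp only: prod.union_disjoint[OF finite_vdm_pairs finite_imageI[OF finite_lessThan]] old new)
  then show ?thesis
    by (simp add: ens_weight_def gauss_def sum.lessThan_Suc algebra_simps exp_add[symmetric])
qed

lemma borel_measurable_row_integral[measurable]:
  "row_integral m a b \<in> borel_measurable (PiM {..<m} (\<lambda>_. lborel))"
proof -
  define f where "f z = ennreal (gauss a (z m) * (\<Prod>i<m. \<bar>z i - z m\<bar> powr b))" for z :: "nat \<Rightarrow> real"
  have [measurable]: "(\<lambda>z. z i) \<in> borel_measurable (PiM (insert m {..<m}) (\<lambda>_. lborel))"
    if "i \<le> m" for i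
  proof -
    have "i \<in> insert m {..<m}"
      using that by auto
    from measurable_component_singleton[OF this, of "\<lambda>_. lborel"] show ?thesis
      by simp
  qed
  have "(\<lambda>z. \<bar>z i - z m\<bar> powr b) \<in> borel_measurable (PiM (insert m {..<m}) (\<lambda>_. lborel))"
    if "i \<in> {..<m}" for i
    using that by auto
  then have "f \<in> borel_measurable (PiM (insert m {..<m}) (\<lambda>_. lborel))"
    unfolding f_def[abs_def] by measurable
  moreover have "row_integral m a b = (\<lambda>x. \<integral>\<^sup>+ y. f (x(m := y)) \<partial>lborel)"
    by (auto simp: fun_eq_iff row_integral_def f_def vdm_row_def intro!: nn_integral_cong prod.cong)
  ultimately show ?thesis
    by (simp add: measurable_nn_integral_fun_upd)
qed

lemma ens_mass_Suc:
  "ens_mass (Suc m) a b =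
    (\<integral>\<^sup>+ x. ennreal (ens_weight m a b x) * row_integral m a b x \<partial>PiM {..<m} (\<lambda>_. lborel))"
proof -
  interpret product_sigma_finite "\<lambda>_::nat. lborel :: real measure" by standard
  have "ens_mass (Suc m) a b =
      (\<integral>\<^sup>+ x. \<integral>\<^sup>+ y. ennreal (ens_weight (Suc m) a b (x(m := y))) \<partial>lborel \<partial>PiM {..<m} (\<lambda>_. lborel))"
    unfolding ens_mass_def lessThan_Suc
    using borel_measurable_ens_weight[of "Suc m" a b]
    by (intro product_nn_integral_insert) (auto simp: lessThan_Suc)
  also have "\<dots> = (\<integral>\<^sup>+ x. ennreal (ens_weight m a b x) * row_integral m a b x \<partial>PiM {..<m} (\<lambda>_. lborel))"
    unfolding row_integral_def ens_weight_fun_upd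
    by (intro nn_integral_cong) (simp add: ennreal_mult' ens_weight_nonneg nn_integral_cmult)
  finally show ?thesis .
qed

lemma ens_weight_scale:
  assumes "0 < c"
  shows "ens_weight m a b (\<lambda>i\<in>{..<m}. c * u i) =
    c powr (b * card (vdm_pairs m)) * ens_weight m (a * c\<^sup>2) b u"
proof -
  have sq: "(\<Sum>i<m. ((\<lambda>i\<in>{..<m}. c * u i) i)\<^sup>2) = c\<^sup>2 * (\<Sum>i<m. (u i)\<^sup>2)"
    by (simp add: sum_distrib_left power_mult_distrib)
  have diff: "(\<Prod>p\<in>vdm_pairs m.
        \<bar>(\<lambda>i\<in>{..<m}. c * u i) (fst p) - (\<lambda>i\<in>{..<m}. c * u i) (snd p)\<bar> powr b) =
      (\<Prod>p\<in>vdm_pairs m. c powr b * \<bar>u (fst p) - u (snd p)\<bar> powr b)"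
    using assms by (intro prod.cong) (auto simp: vdm_pairs_def abs_mult powr_mult
        simp flip: right_diff_distrib)
  have const: "(\<Prod>p\<in>vdm_pairs m. c powr b) = c powr (b * card (vdm_pairs m))"
    using assms by (simp add: powr_realpow[symmetric] powr_powr)
  show ?thesis
    unfolding ens_weight_def sq diff prod.distrib const by (simp add: algebra_simps)
qed

lemma ens_mass_scale:
  assumes "0 < c"
  shows "ens_mass m a b = ennreal (c powr (real m + b * card (vdm_pairs m))) * ens_mass m (a * c\<^sup>2) b"
proof -
  have "ens_mass m a b = ennreal (c ^ m) *
      (\<integral>\<^sup>+ u. ennreal (ens_weight m a b (\<lambda>i\<in>{..<m}. c * u i)) \<partial>PiM {..<m} (\<lambda>_. lborel))"
    unfolding ens_mass_def using assms
    by (subst nn_integral_PiM_lborel_scale[of _ c]) auto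
  also have "\<dots> = ennreal (c ^ m) * (ennreal (c powr (b * card (vdm_pairs m))) * ens_mass m (a * c\<^sup>2) b)"
    unfolding ens_mass_def ens_weight_scale[OF assms]
    by (subst nn_integral_cmult[symmetric]) (auto simp: ennreal_mult')
  finally show ?thesis
    using assms by (simp add: powr_add powr_realpow ennreal_mult' mult.assoc)
qed

lemma ens_weight_mult_prod_le:
  assumes "0 < e" "0 \<le> b"
  shows "ens_weight m a b x * (\<Prod>i<m. (1 + \<bar>x i\<bar>) powr b) \<le>
    exp (real m * b\<^sup>2 / (2 * e)) * ens_weight m (a - e) b x"
proof -
  have "(1 + \<bar>x i\<bar>) powr b \<le> exp (e / 2 * (x i)\<^sup>2 + b\<^sup>2 / (2 * e))" for i
    using one_plus_powr_le_exp[OF assms abs_ge_zero[of "x i"]] by simp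
  then have "(\<Prod>i<m. (1 + \<bar>x i\<bar>) powr b) \<le> (\<Prod>i<m. exp (e / 2 * (x i)\<^sup>2 + b\<^sup>2 / (2 * e)))"
    by (intro prod_mono) auto
  also have "\<dots> = exp (e / 2 * (\<Sum>i<m. (x i)\<^sup>2) + real m * b\<^sup>2 / (2 * e))"
    by (simp add: exp_sum[symmetric] sum.distrib sum_distrib_left)
  finally have "ens_weight m a b x * (\<Prod>i<m. (1 + \<bar>x i\<bar>) powr b) \<le>
      ens_weight m a b x * exp (e / 2 * (\<Sum>i<m. (x i)\<^sup>2) + real m * b\<^sup>2 / (2 * e))"
    by (rule mult_left_mono) (rule ens_weight_nonneg)
  also have "\<dots> = exp (real m * b\<^sup>2 / (2 * e)) * ens_weight m (a - e) b x"
    by (simp add: ens_weight_def exp_add[symmetric] algebra_simps diff_divide_distrib)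
  finally show ?thesis .
qed

lemma ens_mass_Suc_lower:
  assumes "0 < a" "0 \<le> b"
  shows "ennreal (sqrt (2 * pi / a)) * ens_mass m a b \<le>
    ens_mass (Suc m) a b + ennreal (8 * real m * b) * ens_mass m a b"
proof -
  have "ennreal (sqrt (2 * pi / a)) * ens_mass m a b =
      (\<integral>\<^sup>+ x. ennreal (ens_weight m a b x) * ennreal (sqrt (2 * pi / a)) \<partial>PiM {..<m} (\<lambda>_. lborel))"
    unfolding ens_mass_def by (simp add: nn_integral_multc mult.commute)
  also have "\<dots> \<le> (\<integral>\<^sup>+ x. ennreal (ens_weight m a b x) * row_integral m a b x +
      ennreal (ens_weight m a b x) * ennreal (8 * real m * b) \<partial>PiM {..<m} (\<lambda>_. lborel))"
    using row_integral_lower[OF assms]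
    by (intro nn_integral_mono) (simp add: mult_left_mono flip: distrib_left)
  also have "\<dots> = (\<integral>\<^sup>+ x. ennreal (ens_weight m a b x) * row_integral m a b x \<partial>PiM {..<m} (\<lambda>_. lborel)) +
      (\<integral>\<^sup>+ x. ennreal (ens_weight m a b x) * ennreal (8 * real m * b) \<partial>PiM {..<m} (\<lambda>_. lborel))"
    by (rule nn_integral_add) measurable
  also have "\<dots> = ens_mass (Suc m) a b + ennreal (8 * real m * b) * ens_mass m a b"
    unfolding ens_mass_Suc by (simp add: ens_mass_def nn_integral_multc mult.commute)
  finally show ?thesis .
qed

lemma ens_mass_Suc_upper:
  assumes "0 < e" "e < a" "0 \<le> b" "real m * b \<le> 1"
  shows "ens_mass (Suc m) a b \<le>
    ennreal ((sqrt (2 * pi / a) + 2 * real m * b / a) * exp (real m * b\<^sup>2 / (2 * e))) * ens_mass m (a - e) b"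
proof -
  define K where "K = sqrt (2 * pi / a) + 2 * real m * b / a"
  define P where "P x = (\<Prod>i<m. (1 + \<bar>x i\<bar>) powr b)" for x :: "nat \<Rightarrow> real"
  have K: "0 \<le> K"
    using assms by (simp add: K_def)
  have P: "0 \<le> P x" for x
    by (simp add: P_def prod_nonneg)
  have "ennreal (ens_weight m a b x) * row_integral m a b x \<le>
      ennreal (K * exp (real m * b\<^sup>2 / (2 * e))) * ennreal (ens_weight m (a - e) b x)" for x
  proof -
    have "ennreal (ens_weight m a b x) * row_integral m a b x \<le>
        ennreal (ens_weight m a b x) * ennreal (K * P x)"
      using row_integral_upper[of a b m x] assms by (intro mult_left_mono) (auto simp: K_def P_def)
    also have "\<dots> = ennreal (K * (ens_weight m a b x * P x))"
      using K P ens_weight_nonneg[of m a b x] by (subst ennreal_mult[symmetric]) (auto simp: mult_ac)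
    also have "\<dots> \<le> ennreal (K * (exp (real m * b\<^sup>2 / (2 * e)) * ens_weight m (a - e) b x))"
      using ens_weight_mult_prod_le[OF assms(1,3)] K by (auto simp: P_def intro!: ennreal_leI mult_left_mono)
    also have "\<dots> = ennreal (K * exp (real m * b\<^sup>2 / (2 * e))) * ennreal (ens_weight m (a - e) b x)"
      using K by (simp add: ens_weight_nonneg ennreal_mult mult.assoc)
    finally show ?thesis .
  qed
  then have "ens_mass (Suc m) a b \<le> (\<integral>\<^sup>+ x. ennreal (K * exp (real m * b\<^sup>2 / (2 * e))) *
      ennreal (ens_weight m (a - e) b x) \<partial>PiM {..<m} (\<lambda>_. lborel))"
    unfolding ens_mass_Suc by (rule nn_integral_mono)
  also have "\<dots> = ennreal (K * exp (real m * b\<^sup>2 / (2 * e))) * ens_mass m (a - e) b"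
    unfolding ens_mass_def by (rule nn_integral_cmult) measurable
  finally show ?thesis
    unfolding K_def .
qed

lemma ens_mass_finite:
  assumes "0 < a" "0 \<le> b" "real m * b \<le> 1"
  shows "ens_mass m a b < \<top>"
  using assms
proof (induction m arbitrary: a)
  case 0
  then show ?case
    by (simp add: ens_mass_0)
next
  case (Suc m)
  have "real m * b \<le> 1"
    using Suc.prems mult_right_mono[of "real m" "real (Suc m)" b] by simp
  then have "ens_mass (Suc m) a b \<le>
      ennreal ((sqrt (2 * pi / a) + 2 * real m * b / a) * exp (real m * b\<^sup>2 / a)) * ens_mass m (a / 2) b"
    using Suc.prems ens_mass_Suc_upper[of "a / 2" a b m] by simp
  also have "\<dots> < \<top>"
    using Suc.IH[of "a / 2"] Suc.prems \<open>real m * b \<le> 1\<close> by (simp add: ennreal_mult_less_top)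
  finally show ?case .
qed

lemma ens_mass_eq_ennreal_Zpart:
  "0 < a \<Longrightarrow> 0 \<le> b \<Longrightarrow> real m * b \<le> 1 \<Longrightarrow> ens_mass m a b = ennreal (Zpart m a b)"
  using ens_mass_finite[of a b m] by (simp add: Zpart_eq_enn2real_ens_mass ennreal_enn2real_if)

lemma Zpart_scale:
  assumes "0 < c"
  shows "Zpart m a b = c powr (real m + b * card (vdm_pairs m)) * Zpart m (a * c\<^sup>2) b"
  using ens_mass_scale[OF assms, of m a b] by (simp add: Zpart_eq_enn2real_ens_mass enn2real_mult)

lemma Zpart_Suc_lower:
  assumes "0 < a" "0 \<le> b" "real (Suc m) * b \<le> 1"
  shows "(sqrt (2 * pi / a) - 8 * real m * b) * Zpart m a b \<le> Zpart (Suc m) a b"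
proof -
  have "real m * b \<le> 1"
    using assms mult_right_mono[of "real m" "real (Suc m)" b] by simp
  then have "ennreal (sqrt (2 * pi / a) * Zpart m a b) \<le>
      ennreal (Zpart (Suc m) a b) + ennreal (8 * real m * b * Zpart m a b)"
    using ens_mass_Suc_lower[OF assms(1,2), of m] assms
    by (simp add: ens_mass_eq_ennreal_Zpart Zpart_nonneg ennreal_mult)
  then have "sqrt (2 * pi / a) * Zpart m a b \<le> Zpart (Suc m) a b + 8 * real m * b * Zpart m a b"
    using assms by (simp add: Zpart_nonneg flip: ennreal_plus)
  then show ?thesis
    by (simp add: algebra_simps)
qed

lemma Zpart_Suc_upper:
  assumes "0 < e" "e < a" "0 \<le> b" "real m * b \<le> 1"
  shows "Zpart (Suc m) a b \<le>
    (sqrt (2 * pi / a) + 2 * real m * b / a) * exp (real m * b\<^sup>2 / (2 * e)) * Zpart m (a - e) b"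
  unfolding Zpart_eq_enn2real_ens_mass[of "Suc m"]
proof (rule enn2real_leI)
  show "0 \<le> (sqrt (2 * pi / a) + 2 * real m * b / a) * exp (real m * b\<^sup>2 / (2 * e)) * Zpart m (a - e) b"
    using assms by (simp add: Zpart_nonneg)
  show "ens_mass (Suc m) a b \<le>
      ennreal ((sqrt (2 * pi / a) + 2 * real m * b / a) * exp (real m * b\<^sup>2 / (2 * e)) * Zpart m (a - e) b)"
    using ens_mass_Suc_upper[OF assms] ens_mass_eq_ennreal_Zpart[of "a - e" b m] assms
    by (simp add: ennreal_mult Zpart_nonneg)
qed

lemma Zpart_pos:
  assumes "0 < a" "0 \<le> b" "real m * b \<le> 1" "8 * real m * b < sqrt (2 * pi / a)"
  shows "0 < Zpart m a b"
  using assms(3,4)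
proof (induction m)
  case 0
  then show ?case
    by (simp add: Zpart_eq_enn2real_ens_mass ens_mass_0)
next
  case (Suc m)
  have "real m * b \<le> real (Suc m) * b"
    using assms(2) by (intro mult_right_mono) auto
  then have "real m * b \<le> 1" "8 * real m * b < sqrt (2 * pi / a)"
    using Suc.prems by linarith+
  then have "0 < (sqrt (2 * pi / a) - 8 * real m * b) * Zpart m a b"
    using Suc.IH by simp
  also have "\<dots> \<le> Zpart (Suc m) a b"
    using Zpart_Suc_lower assms(1,2) Suc.prems(1) by blast
  finally show ?case .
qed

lemma Zpart_shift_bounds:
  assumes "0 \<le> e" "e < a" "0 \<le> b" "m \<le> n"
  shows "Zpart m a b \<le> Zpart m (a - e) b"
    and "Zpart m (a - e) b \<le>
      exp ((real n * e + (real n * b) * (real n * e)) / (2 * (a - e))) * Zpart m a b"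
proof -
  define c where "c = sqrt (a / (a - e))"
  define X where "X = real m + b * card (vdm_pairs m)"
  have "1 \<le> a / (a - e)"
    using assms by simp
  then have c: "1 \<le> c"
    by (simp add: c_def)
  have "(a - e) * c\<^sup>2 = a"
    using assms by (simp add: c_def)
  then have scale: "Zpart m (a - e) b = c powr X * Zpart m a b"
    using Zpart_scale[of c m "a - e" b] c by (simp add: X_def)
  have X: "0 \<le> X"
    using assms by (simp add: X_def)
  show "Zpart m a b \<le> Zpart m (a - e) b"
    unfolding scale using mult_right_mono[OF ge_one_powr_ge_zero[OF c X] Zpart_nonneg] by simp
  have "ln c = ln (a / (a - e)) / 2"
    using assms by (simp add: c_def ln_sqrt)
  also have "\<dots> \<le> (a / (a - e) - 1) / 2"
    using assms by (simp add: ln_le_minus_one)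
  also have "\<dots> = e / (2 * (a - e))"
    using assms by (simp add: field_simps)
  finally have ln_c: "ln c \<le> e / (2 * (a - e))" .
  have "real (card (vdm_pairs m)) \<le> real n * real n"
    using card_vdm_pairs_le[of m] mult_mono[of m n m n] assms(4) by (simp flip: of_nat_mult)
  then have "X \<le> real n + b * (real n * real n)"
    using assms by (simp add: X_def mult_left_mono add_mono)
  then have "X * ln c \<le> (real n + b * (real n * real n)) * (e / (2 * (a - e)))"
    using X ln_c c by (intro mult_mono) auto
  also have "\<dots> = (real n * e + (real n * b) * (real n * e)) / (2 * (a - e))"
    by (simp add: algebra_simps)
  finally have "c powr X \<le> exp ((real n * e + (real n * b) * (real n * e)) / (2 * (a - e)))"
    using c by (simp add: powr_def mult.commute)
  then show "Zpart m (a - e) b \<le>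
      exp ((real n * e + (real n * b) * (real n * e)) / (2 * (a - e))) * Zpart m a b"
    unfolding scale by (rule mult_right_mono) (rule Zpart_nonneg)
qed

lemma Zpart_Suc_bounds:
  assumes "0 < e" "e < a" "0 \<le> b" "b \<le> e" "real n * b \<le> 1" "m < n"
  shows "(sqrt (2 * pi / a) - 8 * (real n * b)) * Zpart m a b \<le> Zpart (Suc m) a b"
    and "Zpart (Suc m) a b \<le> (sqrt (2 * pi / a) + 2 * (real n * b) / a) *
      exp (real n * b / 2 + (real n * e + (real n * b) * (real n * e)) / (2 * (a - e))) * Zpart m a b"
proof -
  have mn: "real m * b \<le> real n * b" "real (Suc m) * b \<le> real n * b"
    using assms by (auto intro!: mult_right_mono)
  have "(sqrt (2 * pi / a) - 8 * (real n * b)) * Zpart m a b \<le>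
      (sqrt (2 * pi / a) - 8 * real m * b) * Zpart m a b"
    using mn by (intro mult_right_mono Zpart_nonneg) linarith
  also have "\<dots> \<le> Zpart (Suc m) a b"
    using mn assms by (intro Zpart_Suc_lower) auto
  finally show "(sqrt (2 * pi / a) - 8 * (real n * b)) * Zpart m a b \<le> Zpart (Suc m) a b" .
  have "real m * b * b \<le> real n * b * e"
    using mn(1) assms by (intro mult_mono) auto
  then have exp_le: "exp (real m * b\<^sup>2 / (2 * e)) \<le> exp (real n * b / 2)"
    using assms by (simp add: field_simps power2_eq_square)
  have "Zpart (Suc m) a b \<le>
      (sqrt (2 * pi / a) + 2 * real m * b / a) * exp (real m * b\<^sup>2 / (2 * e)) * Zpart m (a - e) b"
    using mn assms by (intro Zpart_Suc_upper) auto
  also have "\<dots> \<le> (sqrt (2 * pi / a) + 2 * (real n * b) / a) * exp (real n * b / 2) *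
      (exp ((real n * e + (real n * b) * (real n * e)) / (2 * (a - e))) * Zpart m a b)"
  proof (rule mult_mono[OF mult_mono])
    show "sqrt (2 * pi / a) + 2 * real m * b / a \<le> sqrt (2 * pi / a) + 2 * (real n * b) / a"
      using mn(1) assms by (simp add: divide_right_mono)
    show "Zpart m (a - e) b \<le> exp ((real n * e + (real n * b) * (real n * e)) / (2 * (a - e))) * Zpart m a b"
      using assms by (intro Zpart_shift_bounds(2)) auto
  qed (use exp_le assms in \<open>auto simp: Zpart_nonneg\<close>)
  finally show "Zpart (Suc m) a b \<le> (sqrt (2 * pi / a) + 2 * (real n * b) / a) *
      exp (real n * b / 2 + (real n * e + (real n * b) * (real n * e)) / (2 * (a - e))) * Zpart m a b"
    by (simp add: exp_add mult_ac)
qed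

section \<open>Asymptotics\<close>

lemma iterate_step_bounds:
  fixes z :: "nat \<Rightarrow> real"
  assumes "0 \<le> L" "0 \<le> U"
    and "\<And>j. j < k \<Longrightarrow> L * z (m + j) \<le> z (Suc (m + j)) \<and> z (Suc (m + j)) \<le> U * z (m + j)"
  shows "L ^ k * z m \<le> z (m + k) \<and> z (m + k) \<le> U ^ k * z m"
  using assms(3)
proof (induction k)
  case (Suc k)
  then have IH: "L ^ k * z m \<le> z (m + k) \<and> z (m + k) \<le> U ^ k * z m"
    and step: "L * z (m + k) \<le> z (Suc (m + k)) \<and> z (Suc (m + k)) \<le> U * z (m + k)"
    by auto
  have "L ^ Suc k * z m \<le> L * z (m + k)"
    using IH assms(1) by (simp add: mult.assoc mult_left_mono)
  moreover have "U * z (m + k) \<le> U ^ Suc k * z m"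
    using IH assms(2) by (simp add: mult.assoc mult_left_mono)
  ultimately show ?case
    using step by simp
qed simp

lemma Zpart_ratio_bounds:
  assumes "0 < e" "e < a" "0 \<le> b" "b \<le> e" "real n * b \<le> 1"
    and "8 * (real n * b) < sqrt (2 * pi / a)" "k \<le> n"
  defines "L \<equiv> sqrt (2 * pi / a) - 8 * (real n * b)"
    and "U \<equiv> (sqrt (2 * pi / a) + 2 * (real n * b) / a) *
      exp (real n * b / 2 + (real n * e + (real n * b) * (real n * e)) / (2 * (a - e)))"
  shows "L ^ k \<le> Zpart n a b / Zpart (n - k) a b \<and> Zpart n a b / Zpart (n - k) a b \<le> U ^ k"
proof -
  have "real (n - k) * b \<le> real n * b"
    using assms(3) by (intro mult_right_mono) auto
  then have "real (n - k) * b \<le> 1" "8 * real (n - k) * b < sqrt (2 * pi / a)"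
    using assms(5,6) by linarith+
  then have pos: "0 < Zpart (n - k) a b"
    using assms(1-3) by (intro Zpart_pos) auto
  have "L ^ k * Zpart (n - k) a b \<le> Zpart (n - k + k) a b \<and>
      Zpart (n - k + k) a b \<le> U ^ k * Zpart (n - k) a b"
  proof (rule iterate_step_bounds)
    show "0 \<le> L" "0 \<le> U"
      using assms by (auto simp: L_def U_def)
    fix j assume "j < k"
    then have "n - k + j < n"
      using assms(7) by linarith
    then show "L * Zpart (n - k + j) a b \<le> Zpart (Suc (n - k + j)) a b \<and>
        Zpart (Suc (n - k + j)) a b \<le> U * Zpart (n - k + j) a b"
      unfolding L_def U_def using assms(1-5) by (intro conjI Zpart_Suc_bounds)
  qed
  then show ?thesis
    using pos assms(7) by (simp add: divide_simps)
qed

lemma LIMSEQ_0_of_real_mult: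
  fixes x :: "nat \<Rightarrow> real"
  assumes "(\<lambda>n. real n * x n) \<longlonglongrightarrow> 0"
  shows "x \<longlonglongrightarrow> 0"
proof -
  have "(\<lambda>n. real n * x n * inverse (real n)) \<longlonglongrightarrow> 0 * 0"
    by (intro tendsto_intros assms tendsto_inverse_0_at_top filterlim_real_sequentially)
  moreover have "eventually (\<lambda>n. real n * x n * inverse (real n) = x n) sequentially"
    using eventually_ge_at_top[of 1] by eventually_elim auto
  ultimately show ?thesis
    using Lim_transform_eventually by fastforce
qed

lemma Zpart_ratio_tendsto:
  assumes "0 < a" "\<And>n. 0 \<le> \<beta> n" "(\<lambda>n. real n * \<beta> n) \<longlonglongrightarrow> 0"
  shows "(\<lambda>n. Zpart n a (\<beta> n) / Zpart (n - k) a (\<beta> n)) \<longlonglongrightarrow> sqrt (2 * pi / a) ^ k"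
proof -
  define S where "S = sqrt (2 * pi / a)"
  define u where "u n = real n * \<beta> n" for n
  \<comment> \<open>\<open>e n \<ge> \<beta> n\<close> is what \<open>Zpart_ratio_bounds\<close> needs; the added square keeps \<open>e n\<close>
    positive while still \<open>n * e n \<rightarrow> 0\<close>.\<close>
  define e where "e n = \<beta> n + (inverse (real (Suc n)))\<^sup>2" for n
  define v where "v n = real n * e n" for n
  define L where "L n = S - 8 * u n" for n
  define U where "U n = (S + 2 * u n / a) * exp (u n / 2 + (v n + u n * v n) / (2 * (a - e n)))" for n
  have S: "0 < S"
    using assms(1) by (simp add: S_def)
  have u: "u \<longlonglongrightarrow> 0"
    using assms(3) unfolding u_def[abs_def] .
  have "e \<longlonglongrightarrow> 0 + 0\<^sup>2"
    unfolding e_def[abs_def]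
    by (intro tendsto_add tendsto_power LIMSEQ_0_of_real_mult[OF assms(3)] LIMSEQ_inverse_real_of_nat)
  then have e: "e \<longlonglongrightarrow> 0"
    by simp
  have "v = (\<lambda>n. u n + real n / real (Suc n) * inverse (real (Suc n)))"
    by (simp add: fun_eq_iff v_def e_def u_def field_simps power2_eq_square)
  moreover have "(\<lambda>n. u n + real n / real (Suc n) * inverse (real (Suc n))) \<longlonglongrightarrow> 0 + 1 * 0"
    by (intro tendsto_add tendsto_mult u LIMSEQ_n_over_Suc_n LIMSEQ_inverse_real_of_nat)
  ultimately have v: "v \<longlonglongrightarrow> 0"
    by simp
  have "(\<lambda>n. L n ^ k) \<longlonglongrightarrow> (S - 8 * 0) ^ k"
    unfolding L_def by (intro tendsto_intros u)
  then have L: "(\<lambda>n. L n ^ k) \<longlonglongrightarrow> S ^ k"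
    by simp
  have "(\<lambda>n. U n ^ k) \<longlonglongrightarrow> ((S + 2 * 0 / a) * exp (0 / 2 + (0 + 0 * 0) / (2 * (a - 0)))) ^ k"
    unfolding U_def using assms(1) by (intro tendsto_intros u v e) auto
  then have U: "(\<lambda>n. U n ^ k) \<longlonglongrightarrow> S ^ k"
    by simp
  have "eventually (\<lambda>n. u n < 1) sequentially"
    by (rule order_tendstoD(2)[OF u]) simp
  moreover have "eventually (\<lambda>n. u n < S / 8) sequentially"
    by (rule order_tendstoD(2)[OF u]) (use S in simp)
  ultimately have "eventually (\<lambda>n. L n ^ k \<le> Zpart n a (\<beta> n) / Zpart (n - k) a (\<beta> n) \<and>
      Zpart n a (\<beta> n) / Zpart (n - k) a (\<beta> n) \<le> U n ^ k) sequentially"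
    using eventually_ge_at_top[of k] order_tendstoD(2)[OF e assms(1)]
  proof eventually_elim
    case (elim n)
    have "0 < e n" "\<beta> n \<le> e n"
      using assms(2)[of n] by (auto simp: e_def add_nonneg_pos)
    then show ?case
      using elim assms(2)[of n] unfolding L_def U_def S_def u_def v_def
      by (intro Zpart_ratio_bounds) auto
  qed
  then have "eventually (\<lambda>n. L n ^ k \<le> Zpart n a (\<beta> n) / Zpart (n - k) a (\<beta> n)) sequentially"
    and "eventually (\<lambda>n. Zpart n a (\<beta> n) / Zpart (n - k) a (\<beta> n) \<le> U n ^ k) sequentially"
    by (auto elim: eventually_mono)
  then show ?thesis
    unfolding S_def[symmetric] by (rule tendsto_sandwich[OF _ _ L U])
qed

lemma Zpart_shift_ratio_bounds:
  assumes "0 \<le> e" "e < a" "0 \<le> b" "real n * b \<le> 1" "8 * (real n * b) < sqrt (2 * pi / a)"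
    and "m \<le> n"
  shows "1 \<le> Zpart m (a - e) b / Zpart m a b \<and>
    Zpart m (a - e) b / Zpart m a b \<le> exp ((real n * e + (real n * b) * (real n * e)) / (2 * (a - e)))"
proof -
  have "real m * b \<le> real n * b"
    using assms(3,6) by (intro mult_right_mono) auto
  then have "real m * b \<le> 1" "8 * real m * b < sqrt (2 * pi / a)"
    using assms(4,5) by linarith+
  then have "0 < Zpart m a b"
    using assms(1-3) by (intro Zpart_pos) auto
  then show ?thesis
    using Zpart_shift_bounds[OF assms(1-3,6)] by (simp add: divide_simps mult.commute)
qed

lemma Zpart_shift_ratio_tendsto_1:
  assumes "0 < a" "\<And>n. 0 \<le> \<beta> n" "(\<lambda>n. real n * \<beta> n) \<longlonglongrightarrow> 0"
    and "\<And>n. 0 \<le> \<epsilon> n" "(\<lambda>n. real n * \<epsilon> n) \<longlonglongrightarrow> 0" and "\<And>n. m n \<le> n"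
  shows "(\<lambda>n. Zpart (m n) (a - \<epsilon> n) (\<beta> n) / Zpart (m n) a (\<beta> n)) \<longlonglongrightarrow> 1"
proof -
  define S where "S = sqrt (2 * pi / a)"
  define u where "u n = real n * \<beta> n" for n
  define v where "v n = real n * \<epsilon> n" for n
  define U where "U n = exp ((v n + u n * v n) / (2 * (a - \<epsilon> n)))" for n
  have S: "0 < S"
    using assms(1) by (simp add: S_def)
  have u: "u \<longlonglongrightarrow> 0" and v: "v \<longlonglongrightarrow> 0" and \<epsilon>: "\<epsilon> \<longlonglongrightarrow> 0"
    using assms(3,5) LIMSEQ_0_of_real_mult[OF assms(5)] unfolding u_def[abs_def] v_def[abs_def] .
  have "U \<longlonglongrightarrow> exp ((0 + 0 * 0) / (2 * (a - 0)))"
    unfolding U_def using assms(1) by (intro tendsto_intros u v \<epsilon>) auto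
  then have U: "U \<longlonglongrightarrow> 1"
    by simp
  have "eventually (\<lambda>n. u n < 1) sequentially"
    by (rule order_tendstoD(2)[OF u]) simp
  moreover have "eventually (\<lambda>n. u n < S / 8) sequentially"
    by (rule order_tendstoD(2)[OF u]) (use S in simp)
  ultimately have "eventually (\<lambda>n. 1 \<le> Zpart (m n) (a - \<epsilon> n) (\<beta> n) / Zpart (m n) a (\<beta> n) \<and>
      Zpart (m n) (a - \<epsilon> n) (\<beta> n) / Zpart (m n) a (\<beta> n) \<le> U n) sequentially"
    using order_tendstoD(2)[OF \<epsilon> assms(1)]
  proof eventually_elim
    case (elim n)
    then show ?case
      using assms(2,4,6) unfolding U_def S_def u_def v_def
      by (intro Zpart_shift_ratio_bounds) auto
  qed
  then have "eventually (\<lambda>n. 1 \<le> Zpart (m n) (a - \<epsilon> n) (\<beta> n) / Zpart (m n) a (\<beta> n)) sequentially"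
    and "eventually (\<lambda>n. Zpart (m n) (a - \<epsilon> n) (\<beta> n) / Zpart (m n) a (\<beta> n) \<le> U n) sequentially"
    by (auto elim: eventually_mono)
  then show ?thesis
    by (rule tendsto_sandwich[OF _ _ tendsto_const U])
qed

lemma bseq_inverse_square_tendsto_0:
  assumes "(\<lambda>n. ln (\<delta> n) / ln (real n)) \<longlonglongrightarrow> 0"
  shows "(\<lambda>n. 1 / (bseq \<delta> n)\<^sup>2) \<longlonglongrightarrow> 0"
proof -
  define q where "q n = (ln (ln (real n)) + 2 * ln (\<delta> n) + ln (4 * pi)) / (4 * ln (real n))" for n
  have ln_n: "filterlim (\<lambda>n. ln (real n)) at_top sequentially"
    by (rule filterlim_compose[OF ln_at_top filterlim_real_sequentially])
  have "q = (\<lambda>n. ln (ln (real n)) / ln (real n) / 4 + ln (\<delta> n) / ln (real n) / 2 +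
      ln (4 * pi) * inverse (ln (real n)) / 4)"
    by (simp add: fun_eq_iff q_def field_simps add_divide_distrib)
  moreover have "\<dots> \<longlonglongrightarrow> 0 / 4 + 0 / 2 + ln (4 * pi) * 0 / 4"
    by (intro tendsto_intros assms filterlim_compose[OF ln_x_over_x_tendsto_0 ln_n]
        tendsto_inverse_0_at_top[OF ln_n]) simp_all
  ultimately have q: "q \<longlonglongrightarrow> 0"
    by simp
  have "(\<lambda>n. 1 / (1 - q n)) \<longlonglongrightarrow> 1 / (1 - 0)"
    by (intro tendsto_divide tendsto_diff tendsto_const q) simp
  then have "(\<lambda>n. 1 / 2 * inverse (ln (real n)) * (1 / (1 - q n))\<^sup>2) \<longlonglongrightarrow> 1 / 2 * 0 * (1 / (1 - 0))\<^sup>2"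
    by (intro tendsto_mult tendsto_const tendsto_power tendsto_inverse_0_at_top[OF ln_n])
  moreover have "eventually (\<lambda>n. 1 / 2 * inverse (ln (real n)) * (1 / (1 - q n))\<^sup>2 = 1 / (bseq \<delta> n)\<^sup>2)
      sequentially"
    using eventually_ge_at_top[of 2]
  proof eventually_elim
    case (elim n)
    define L where "L = ln (real n)"
    define s where "s = sqrt (2 * L)"
    have L: "0 < L"
      using elim by (simp add: L_def)
    have s: "0 < s" "s\<^sup>2 = 2 * L"
      using L by (auto simp: s_def)
    have "bseq \<delta> n = s - (q n * (4 * L)) / (2 * s)"
      using L by (simp add: bseq_def q_def s_def L_def)
    also have "\<dots> = s * (1 - q n)"
      using s by (simp add: field_simps power2_eq_square)
    finally have "(bseq \<delta> n)\<^sup>2 = 2 * L * (1 - q n)\<^sup>2"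
      by (simp add: power_mult_distrib s(2))
    then show ?case
      by (simp add: L_def field_simps)
  qed
  ultimately have "(\<lambda>n. 1 / (bseq \<delta> n)\<^sup>2) \<longlonglongrightarrow> 1 / 2 * 0 * (1 / (1 - 0))\<^sup>2"
    by (rule Lim_transform_eventually)
  then show ?thesis
    by simp
qed

lemma inverse_sqrt_divide_power:
  fixes x y :: real
  assumes "0 < x" "0 < y"
  shows "inverse (sqrt (x / y) ^ k) = x powr (- real k / 2) * y powr (real k / 2)"
proof -
  have "sqrt (x / y) ^ k = (x / y) powr (real k / 2)"
    using assms by (simp add: powr_realpow[symmetric] powr_half_sqrt[symmetric] powr_powr)
  also have "\<dots> = x powr (real k / 2) / y powr (real k / 2)"
    using assms by (simp add: powr_divide)
  finally show ?thesis
    using assms by (simp add: powr_minus field_simps)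
qed

theorem lemma2p4:
  fixes k :: nat and \<alpha> :: real and \<beta> \<delta> :: "nat \<Rightarrow> real"
  assumes "1 \<le> k" and "0 < \<alpha>"
    and "\<And>n. 0 \<le> \<beta> n"
    and "(\<lambda>n. real n * \<beta> n) \<longlonglongrightarrow> 0"
    and "\<And>n. 0 < \<delta> n"
    and "(\<lambda>n. ln (\<delta> n) / ln (real n)) \<longlonglongrightarrow> 0"
  shows "((\<lambda>n. Zpart (n - k) \<alpha> (\<beta> n) / Zpart n \<alpha> (\<beta> n))
           \<longlonglongrightarrow> (2 * pi) powr (- real k / 2) * \<alpha> powr (real k / 2))
    \<and> ((\<lambda>n. Zpart (n - k) (\<alpha> - real k * \<beta> n / (4 * (bseq \<delta> n)\<^sup>2)) (\<beta> n)
               / Zpart (n - k) \<alpha> (\<beta> n)) \<longlonglongrightarrow> 1)"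
proof
  have "(\<lambda>n. Zpart n \<alpha> (\<beta> n) / Zpart (n - k) \<alpha> (\<beta> n)) \<longlonglongrightarrow> sqrt (2 * pi / \<alpha>) ^ k"
    using assms(2-4) by (rule Zpart_ratio_tendsto)
  then have "(\<lambda>n. inverse (Zpart n \<alpha> (\<beta> n) / Zpart (n - k) \<alpha> (\<beta> n))) \<longlonglongrightarrow> inverse (sqrt (2 * pi / \<alpha>) ^ k)"
    using assms(2) by (intro tendsto_inverse) auto
  then show "(\<lambda>n. Zpart (n - k) \<alpha> (\<beta> n) / Zpart n \<alpha> (\<beta> n))
      \<longlonglongrightarrow> (2 * pi) powr (- real k / 2) * \<alpha> powr (real k / 2)"
    using assms(2) by (simp add: inverse_sqrt_divide_power)
  have "(\<lambda>n. real k / 4 * (real n * \<beta> n) * (1 / (bseq \<delta> n)\<^sup>2)) \<longlonglongrightarrow> real k / 4 * 0 * 0"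
    by (intro tendsto_intros assms(4) bseq_inverse_square_tendsto_0 assms(6))
  then have "(\<lambda>n. real n * (real k * \<beta> n / (4 * (bseq \<delta> n)\<^sup>2))) \<longlonglongrightarrow> 0"
    by (simp add: field_simps)
  then show "(\<lambda>n. Zpart (n - k) (\<alpha> - real k * \<beta> n / (4 * (bseq \<delta> n)\<^sup>2)) (\<beta> n)
      / Zpart (n - k) \<alpha> (\<beta> n)) \<longlonglongrightarrow> 1"
    using assms(2-4) by (intro Zpart_shift_ratio_tendsto_1) auto
qed

end
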